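(* Let $\mathbf P$ be a multi-cut polygon as in the context, with $Q(z)=\prod_{i=1}^{d+N}(z-x_i)$, and let $\mathcal S$ be the set of integer points $(n,y)\in\widetilde{\mathbf P}\setminus\mathbf P$ such that $(n,y-\frac12)$ lies on an upper oblique boundary segment of $\mathbf P$ or $(n,y+\frac12)$ lies on an upper vertical boundary segment of $\mathbf P$. Then for $(n,y)\in\mathcal S$, summing over the roots $z=y-N+n,\dots,y$ of $(z-y)_{N-n+1}$, $$\sum_{z=y-N+n}^{y}\frac{(N-n)!\,Q(z)}{(z-y)_{N-n+1}\,Q'(z)\,S^{(N)}_z(w)}=\frac1{S^{(n)}_y(w)},$$ where each summand means the value at $z$ of the rational function $\frac{(N-n)!\,Q(z)}{(z-y)_{N-n+1}Q'(z)}$ after cancellation of common factors, times $1/S^{(N)}_z(w)$.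
   Context: Coordinates $(m,x)\in\mathbb R^2$ ($m$ = height), lattice lines $m\in\mathbb Z$, $x\in\mathbb Z+\frac12$ (vertical), $x+m\in\mathbb Z+\frac12$ (oblique). Multi-cut polygon: fix integers $N\ge1$, $d\ge0$; $\widetilde{\mathbf P}=\{(m,x):0\le m\le N,\ -d-\frac12-m\le x\le x_1+\frac12\}$. $\mathbf P$ is obtained from $\widetilde{\mathbf P}$ by removing: a triangle at the upper-left corner with $b_0$ rows (bounded by the left side of $\widetilde{\mathbf P}$, $m=N$ and a vertical line); a triangle at the upper-right corner with $b_u$ rows (bounded by the right side, $m=N$ and an oblique line); $\ell$ disjoint triangular lower cuts with bases on $m=0$ (vertical left side, oblique right side), of total size $d$; $u-1$ disjoint triangular upper cuts of sizes $b_1,\dots,b_{u-1}$ with bases on $m=N$ (oblique left side, vertical right side); $\sum_0^ub_i=d+N$; all vertices on lines $x\in\mathbb Z+\frac12$. Upper oblique boundary segments: the right oblique side of $\mathbf P$ and the oblique sides of upper cuts; upper vertical boundary segments: the left vertical side of $\mathbf P$ and the vertical sides of upper cuts. $x_1>\dots>x_{d+N}$ are the integer points of $(\widetilde{\mathbf P}\setminus\mathbf P)\cap\{m=N\}$. Notation: $(a)_k=a(a+1)\cdots(a+k-1)$, $(a)_0=1$; $S^{(k)}_x(w)=w^{x+1}(1-w)^k$. *)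

theory Defs
  imports Complex_Main "HOL-Computational_Algebra.Computational_Algebra" "HOL-Computational_Algebra.Field_as_Ring"
begin

text \<open>Coordinates (m,x) in real x real, m = height.\<close>

definition Ptilde :: "nat \<Rightarrow> nat \<Rightarrow> int \<Rightarrow> (real \<times> real) set" where
  "Ptilde N d x1 = {(m, x). 0 \<le> m \<and> m \<le> real N \<and>
      - real d - 1/2 - m \<le> x \<and> x \<le> real_of_int x1 + 1/2}"

text \<open>Upper triangle (base on m = N, oblique left side, vertical right side) with bb rows,
  whose top row contains the integer points rr-bb+1, ..., rr.\<close>
definition up_tri :: "nat \<Rightarrow> nat \<Rightarrow> int \<Rightarrow> (real \<times> real) set" where
  "up_tri N bb rr = {(m, x). real N - real bb \<le> m \<and> m \<le> real N \<and>
      real_of_int rr - real bb + 1/2 + (real N - m) \<le> x \<and> x \<le> real_of_int rr + 1/2}"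

definition obl_side :: "nat \<Rightarrow> nat \<Rightarrow> int \<Rightarrow> (real \<times> real) set" where
  "obl_side N bb rr = {(m, x). real N - real bb \<le> m \<and> m \<le> real N \<and>
      x = real_of_int rr - real bb + 1/2 + (real N - m)}"

definition vert_side :: "nat \<Rightarrow> nat \<Rightarrow> int \<Rightarrow> (real \<times> real) set" where
  "vert_side N bb rr = {(m, x). real N - real bb \<le> m \<and> m \<le> real N \<and>
      x = real_of_int rr + 1/2}"

text \<open>Lower triangle (base on m = 0, vertical left side, oblique right side) of size aa,
  whose bottom row contains the integer points ll, ..., ll+aa-1.\<close>
definition low_tri :: "nat \<Rightarrow> int \<Rightarrow> (real \<times> real) set" where
  "low_tri aa ll = {(m, x). 0 \<le> m \<and> m \<le> real aa \<and>
      real_of_int ll - 1/2 \<le> x \<and> x \<le> real_of_int ll + real aa - 1/2 - m}"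

text \<open>The polygon P: upper triangles indexed 0..u (0 = upper-left corner, u = upper-right
  corner, 1..u-1 = upper cuts), lower cuts indexed 0..L-1.\<close>
definition Pset :: "nat \<Rightarrow> nat \<Rightarrow> int \<Rightarrow> nat \<Rightarrow> (nat \<Rightarrow> nat) \<Rightarrow> (nat \<Rightarrow> int)
    \<Rightarrow> nat \<Rightarrow> (nat \<Rightarrow> nat) \<Rightarrow> (nat \<Rightarrow> int) \<Rightarrow> (real \<times> real) set" where
  "Pset N d x1 u b r L a l = Ptilde N d x1
      - (\<Union>i\<in>{..u}. up_tri N (b i) (r i)) - (\<Union>j\<in>{..<L}. low_tri (a j) (l j))"

definition multicut_polygon :: "nat \<Rightarrow> nat \<Rightarrow> int \<Rightarrow> nat \<Rightarrow> (nat \<Rightarrow> nat) \<Rightarrow> (nat \<Rightarrow> int)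
    \<Rightarrow> nat \<Rightarrow> (nat \<Rightarrow> nat) \<Rightarrow> (nat \<Rightarrow> int) \<Rightarrow> bool" where
  "multicut_polygon N d x1 u b r L a l \<longleftrightarrow>
     N \<ge> 1 \<and> u \<ge> 1 \<and>
     \<comment> \<open>upper-left corner triangle is bounded by the (oblique) left side of Ptilde\<close>
     r 0 - int (b 0) + 1 = - int d - int N \<and>
     \<comment> \<open>upper-right corner triangle is bounded by the (vertical) right side of Ptilde\<close>
     r u = x1 \<and>
     \<comment> \<open>x1 is a removed integer point on the top row (it is then the largest one)\<close>
     (real N, real_of_int x1) \<in> Ptilde N d x1 - Pset N d x1 u b r L a l \<and>
     (\<forall>i\<in>{1..<u}. b i \<ge> 1) \<and>
     (\<forall>i\<le>u. up_tri N (b i) (r i) \<subseteq> Ptilde N d x1) \<and>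
     \<comment> \<open>upper triangles listed from left to right, with disjoint interiors\<close>
     (\<forall>i\<in>{1..u}. r (i - 1) \<le> r i - int (b i)) \<and>
     (\<Sum>i\<le>u. b i) = d + N \<and>
     (\<forall>j<L. a j \<ge> 1 \<and> low_tri (a j) (l j) \<subseteq> Ptilde N d x1) \<and>
     \<comment> \<open>lower cuts listed from left to right, with disjoint interiors\<close>
     (\<forall>j. Suc j < L \<longrightarrow> l j + int (a j) \<le> l (Suc j)) \<and>
     (\<Sum>j<L. a j) = d \<and>
     \<comment> \<open>upper and lower cuts are disjoint\<close>
     (\<forall>i\<le>u. \<forall>j<L. up_tri N (b i) (r i) \<inter> low_tri (a j) (l j) = {})"

text \<open>Integer points of (Ptilde - P) on the row m = N: the roots x_1 > ... > x_{d+N} of Q.\<close>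
definition top_points :: "nat \<Rightarrow> nat \<Rightarrow> int \<Rightarrow> nat \<Rightarrow> (nat \<Rightarrow> nat) \<Rightarrow> (nat \<Rightarrow> int)
    \<Rightarrow> nat \<Rightarrow> (nat \<Rightarrow> nat) \<Rightarrow> (nat \<Rightarrow> int) \<Rightarrow> int set" where
  "top_points N d x1 u b r L a l =
     {x. (real N, real_of_int x) \<in> Ptilde N d x1 - Pset N d x1 u b r L a l}"

definition Qpoly :: "nat \<Rightarrow> nat \<Rightarrow> int \<Rightarrow> nat \<Rightarrow> (nat \<Rightarrow> nat) \<Rightarrow> (nat \<Rightarrow> int)
    \<Rightarrow> nat \<Rightarrow> (nat \<Rightarrow> nat) \<Rightarrow> (nat \<Rightarrow> int) \<Rightarrow> real poly" where
  "Qpoly N d x1 u b r L a l = (\<Prod>x\<in>top_points N d x1 u b r L a l. [:- of_int x, 1:])"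

text \<open>Upper oblique boundary segments: oblique sides of the upper triangles
  1..u (upper cuts and right oblique side of P); upper vertical boundary segments:
  vertical sides of the upper triangles 0..u-1 (left vertical side of P and upper cuts).\<close>
definition Sset :: "nat \<Rightarrow> nat \<Rightarrow> int \<Rightarrow> nat \<Rightarrow> (nat \<Rightarrow> nat) \<Rightarrow> (nat \<Rightarrow> int)
    \<Rightarrow> nat \<Rightarrow> (nat \<Rightarrow> nat) \<Rightarrow> (nat \<Rightarrow> int) \<Rightarrow> (int \<times> int) set" where
  "Sset N d x1 u b r L a l =
     {(n, y). (real_of_int n, real_of_int y) \<in> Ptilde N d x1 - Pset N d x1 u b r L a l \<and>
        ((real_of_int n, real_of_int y - 1/2) \<in> (\<Union>i\<in>{1..u}. obl_side N (b i) (r i)) \<or>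
         (real_of_int n, real_of_int y + 1/2) \<in> (\<Union>i\<in>{..<u}. vert_side N (b i) (r i)))}"

definition poch_poly :: "int \<Rightarrow> nat \<Rightarrow> real poly" where
  "poch_poly y k = (\<Prod>j<k. [:of_int (int j - y), 1:])"

definition rat_val :: "real poly \<Rightarrow> real poly \<Rightarrow> real \<Rightarrow> real" where
  "rat_val p q z = poly (p div gcd p q) z / poly (q div gcd p q) z"

definition Sfun :: "nat \<Rightarrow> int \<Rightarrow> complex \<Rightarrow> complex" where
  "Sfun k x w = w powi (x + 1) * (1 - w) ^ k"

end

theory Submission
  imports Defs
begin

text \<open>Let \<open>k = N - n\<close>. The point \<open>(n, y)\<close> cannot lie in a lower cut, since one of its
  horizontal half-step neighbours lies on the boundary of an upper triangle and would then
  belong to both. So it lies in an upper triangle, whose top row therefore contains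
  \<open>y - k, \<dots>, y\<close>. These are simple roots of \<open>Q\<close>, each cancelling against a simple root of
  the Pochhammer factor, so at \<open>z = y - t\<close> the reduced rational function takes the value
  \<open>k! / (\<Prod>j\<noteq>t. j - t) = (-1)^t (k choose t)\<close>. Since \<open>S_(y-t)^(N)(w) = S_y^(N)(w) / w^t\<close>,
  the binomial theorem turns the sum into \<open>(1 - w)^k / S_y^(N)(w) = 1 / S_y^(n)(w)\<close>.\<close>

lemma of_int_minus_half_le_imp_le:
  assumes "real_of_int a - 1/2 \<le> real_of_int b"
  shows "a \<le> b"
proof -
  have "real_of_int (a - b) < 1" using assms by simp
  then show ?thesis by linarith
qed

lemma finite_top_points: "finite (top_points N d x1 u b r L a l)"
proof (rule finite_subset)
  show "top_points N d x1 u b r L a l \<subseteq> {- int d - int N .. x1}"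
  proof
    fix x assume "x \<in> top_points N d x1 u b r L a l"
    then have "- real d - 1/2 - real N \<le> real_of_int x" "real_of_int x \<le> real_of_int x1 + 1/2"
      unfolding top_points_def Ptilde_def by auto
    then show "x \<in> {- int d - int N .. x1}"
      using of_int_minus_half_le_imp_le[of "- int d - int N" x]
        of_int_minus_half_le_imp_le[of x x1] by simp
  qed
qed simp

lemma obl_side_subset_up_tri: "obl_side N bb rr \<subseteq> up_tri N bb rr"
  unfolding obl_side_def up_tri_def by auto

lemma vert_side_subset_up_tri: "vert_side N bb rr \<subseteq> up_tri N bb rr"
  unfolding vert_side_def up_tri_def by auto

lemma low_tri_half_neighbours:
  assumes "(real_of_int m, real_of_int x) \<in> low_tri aa ll"
  shows "(real_of_int m, real_of_int x - 1/2) \<in> low_tri aa ll"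
    and "(real_of_int m, real_of_int x + 1/2) \<in> low_tri aa ll"
proof -
  have m: "0 \<le> real_of_int m" "real_of_int m \<le> real aa"
    and left: "real_of_int ll - 1/2 \<le> real_of_int x"
    and right: "real_of_int (x + m) - 1/2 \<le> real_of_int (ll + int aa - 1)"
    using assms unfolding low_tri_def by auto
  have "ll \<le> x" "x + m \<le> ll + int aa - 1"
    using of_int_minus_half_le_imp_le left right by blast+
  then have "real_of_int ll \<le> real_of_int x"
    and "real_of_int x + real_of_int m + 1 \<le> real_of_int ll + real aa"
    by linarith+
  then show "(real_of_int m, real_of_int x - 1/2) \<in> low_tri aa ll"
    and "(real_of_int m, real_of_int x + 1/2) \<in> low_tri aa ll"
    using m left unfolding low_tri_def by auto
qed

lemma up_tri_top_row:
  assumes "(m, x) \<in> up_tri N bb rr" and "real t \<le> real N - m"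
  shows "(real N, x - real t) \<in> up_tri N bb rr"
  using assms unfolding up_tri_def by auto

lemma Sset_height:
  assumes "(n, y) \<in> Sset N d x1 u b r L a l"
  shows "0 \<le> n" and "n \<le> int N"
  using assms unfolding Sset_def Ptilde_def by auto

lemma Sset_not_in_low_tri:
  assumes M: "multicut_polygon N d x1 u b r L a l"
    and S: "(n, y) \<in> Sset N d x1 u b r L a l" and j: "j < L"
  shows "(real_of_int n, real_of_int y) \<notin> low_tri (a j) (l j)"
proof
  assume low: "(real_of_int n, real_of_int y) \<in> low_tri (a j) (l j)"
  have disj: "\<And>i. i \<le> u \<Longrightarrow> up_tri N (b i) (r i) \<inter> low_tri (a j) (l j) = {}"
    using M j unfolding multicut_polygon_def by auto
  from S consider
      i where "i \<in> {1..u}" "(real_of_int n, real_of_int y - 1/2) \<in> obl_side N (b i) (r i)"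
    | i where "i < u" "(real_of_int n, real_of_int y + 1/2) \<in> vert_side N (b i) (r i)"
    unfolding Sset_def by auto
  then show False
  proof cases
    case 1
    then have "(real_of_int n, real_of_int y - 1/2) \<in> up_tri N (b i) (r i)"
      using obl_side_subset_up_tri by blast
    then show False
      using disj[of i] 1 low_tri_half_neighbours(1)[OF low] by auto
  next
    case 2
    then have "(real_of_int n, real_of_int y + 1/2) \<in> up_tri N (b i) (r i)"
      using vert_side_subset_up_tri by blast
    then show False
      using disj[of i] 2 low_tri_half_neighbours(2)[OF low] by auto
  qed
qed

lemma Sset_in_up_tri:
  assumes "multicut_polygon N d x1 u b r L a l" and "(n, y) \<in> Sset N d x1 u b r L a l"
  obtains i where "i \<le> u" and "(real_of_int n, real_of_int y) \<in> up_tri N (b i) (r i)"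
proof -
  have "(real_of_int n, real_of_int y) \<in> Ptilde N d x1 - Pset N d x1 u b r L a l"
    using assms(2) unfolding Sset_def by auto
  then have "(real_of_int n, real_of_int y) \<in> (\<Union>i\<in>{..u}. up_tri N (b i) (r i))"
    using Sset_not_in_low_tri[OF assms] unfolding Pset_def by blast
  then show ?thesis using that by auto
qed

lemma Sset_top_row_in_top_points:
  assumes M: "multicut_polygon N d x1 u b r L a l"
    and S: "(n, y) \<in> Sset N d x1 u b r L a l" and t: "t \<le> nat (int N - n)"
  shows "y - int t \<in> top_points N d x1 u b r L a l"
proof -
  obtain i where i: "i \<le> u" "(real_of_int n, real_of_int y) \<in> up_tri N (b i) (r i)"
    using Sset_in_up_tri[OF M S] .
  have "real t \<le> real N - real_of_int n"
    using t Sset_height(2)[OF S] by linarith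
  then have "(real N, real_of_int (y - int t)) \<in> up_tri N (b i) (r i)"
    using up_tri_top_row[OF i(2)] by simp
  moreover have "up_tri N (b i) (r i) \<subseteq> Ptilde N d x1"
    using M i(1) unfolding multicut_polygon_def by auto
  ultimately show ?thesis
    unfolding top_points_def Pset_def using i(1) by auto
qed

lemma rat_val_cancel_common_root:
  fixes p q p1 q1 :: "real poly"
  assumes "p = [:-c, 1:] * p1" and "q = [:-c, 1:] * q1"
    and p1: "poly p1 c \<noteq> 0" and q1: "poly q1 c \<noteq> 0"
  shows "rat_val p q c = poly p1 c / poly q1 c"
proof -
  define g where "g = gcd p q"
  define A where "A = p div g"
  define B where "B = q div g"
  have "p1 \<noteq> 0" using p1 by auto
  then have "p \<noteq> 0" using assms(1) by (metis mult_eq_0_iff pCons_eq_0_iff one_neq_zero)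
  then have "g \<noteq> 0" and coprime: "coprime A B"
    unfolding g_def A_def B_def using div_gcd_coprime by auto
  have "p = g * A" and "q = g * B" unfolding A_def B_def g_def by simp_all
  then have "g * (A * q1) = g * (B * p1)"
    using assms(1,2) by (metis mult.assoc mult.commute)
  then have "poly A c * poly q1 c = poly B c * poly p1 c"
    using \<open>g \<noteq> 0\<close> by (metis mult_cancel_left poly_mult)
  moreover have "poly B c \<noteq> 0"
  proof
    assume B: "poly B c = 0"
    then have "poly A c = 0" using \<open>poly A c * poly q1 c = _\<close> q1 by simp
    then have "[:-c, 1:] dvd A" and "[:-c, 1:] dvd B" using B by (simp_all add: poly_eq_0_iff_dvd)
    then have "is_unit [:-c, 1:]" using coprime coprime_common_divisor by blast
    then show False by (auto simp: is_unit_poly_iff)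
  qed
  ultimately show ?thesis
    unfolding rat_val_def g_def[symmetric] A_def[symmetric] B_def[symmetric]
    using q1 by (simp add: field_simps)
qed

lemma prod_atMost_remove_diff:
  assumes "t \<le> k"
  shows "(\<Prod>j\<in>{..k} - {t}. real j - real t) = (-1) ^ t * fact t * fact (k - t)"
  using assms
proof (induction k rule: dec_induct)
  case base
  have "{..t} - {t} = {..<t}" by auto
  then have "(\<Prod>j\<in>{..t} - {t}. real j - real t) = pochhammer (- real t) t"
    by (simp add: pochhammer_prod atLeast0LessThan)
  then show ?case by (simp add: pochhammer_minus pochhammer_fact)
next
  case (step k)
  have "{..Suc k} - {t} = insert (Suc k) ({..k} - {t})" using step by auto
  then show ?case
    using step by (simp add: Suc_diff_le of_nat_diff)
qed

lemma prod_linear_factors_simple_root: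
  fixes T :: "int set"
  assumes "finite T" and "c \<in> T"
  defines "R \<equiv> (\<Prod>x\<in>T - {c}. [:- of_int x, 1:]) :: real poly"
  shows "(\<Prod>x\<in>T. [:- of_int x, 1:]) = [:- of_int c, 1:] * R"
    and "poly R (of_int c) \<noteq> 0"
    and "poly (pderiv (\<Prod>x\<in>T. [:- of_int x, 1:])) (of_int c) = poly R (of_int c)"
proof -
  show factor: "(\<Prod>x\<in>T. [:- of_int x, 1:]) = [:- of_int c, 1:] * R"
    unfolding R_def using assms(1,2) by (simp add: prod.remove)
  show "poly R (of_int c) \<noteq> 0"
    unfolding R_def using assms(1) by (simp add: poly_prod prod_zero_iff)
  show "poly (pderiv (\<Prod>x\<in>T. [:- of_int x, 1:])) (of_int c) = poly R (of_int c)"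
    unfolding factor pderiv_mult by (simp add: pderiv_pCons)
qed

lemma poch_poly_simple_root:
  fixes y :: int
  assumes "t \<le> k"
  defines "P \<equiv> (\<Prod>j\<in>{..k} - {t}. [:of_int (int j - y), 1:]) :: real poly"
  shows "poch_poly y (Suc k) = [:- of_int (y - int t), 1:] * P"
    and "poly P (of_int (y - int t)) = (-1) ^ t * fact t * fact (k - t)"
proof -
  have "poch_poly y (Suc k) = (\<Prod>j\<in>{..k}. [:of_int (int j - y), 1:])"
    unfolding poch_poly_def lessThan_Suc_atMost ..
  also have "\<dots> = [:of_int (int t - y), 1:] * P"
    unfolding P_def using assms(1) by (simp add: prod.remove)
  finally show "poch_poly y (Suc k) = [:- of_int (y - int t), 1:] * P" by simp
  have "poly P (of_int (y - int t)) = (\<Prod>j\<in>{..k} - {t}. real j - real t)"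
    unfolding P_def by (simp add: poly_prod)
  also have "\<dots> = (-1) ^ t * fact t * fact (k - t)"
    using prod_atMost_remove_diff[OF assms(1)] .
  finally show "poly P (of_int (y - int t)) = (-1) ^ t * fact t * fact (k - t)" .
qed

lemma rat_val_poch_poly_at_root:
  fixes T :: "int set"
  assumes T: "finite T" "y - int t \<in> T" and t: "t \<le> k"
  defines "Q \<equiv> (\<Prod>x\<in>T. [:- of_int x, 1:]) :: real poly"
  shows "rat_val (smult (fact k) Q) (poch_poly y (Suc k) * pderiv Q) (of_int (y - int t))
     = (-1) ^ t * real (k choose t)"
proof -
  define R :: "real poly" where "R = (\<Prod>x\<in>T - {y - int t}. [:- of_int x, 1:])"
  define P :: "real poly" where "P = (\<Prod>j\<in>{..k} - {t}. [:of_int (int j - y), 1:])"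
  note Q_root = prod_linear_factors_simple_root[OF T, folded Q_def R_def]
  note P_root = poch_poly_simple_root[OF t, of y, folded P_def]
  have "rat_val (smult (fact k) Q) (poch_poly y (Suc k) * pderiv Q) (of_int (y - int t))
      = poly (smult (fact k) R) (of_int (y - int t)) / poly (P * pderiv Q) (of_int (y - int t))"
  proof (rule rat_val_cancel_common_root)
    show "smult (fact k) Q = [:- of_int (y - int t), 1:] * smult (fact k) R"
      using Q_root(1) by simp
    show "poch_poly y (Suc k) * pderiv Q = [:- of_int (y - int t), 1:] * (P * pderiv Q)"
      unfolding P_root(1) by (simp only: mult.assoc)
    show "poly (smult (fact k) R) (of_int (y - int t)) \<noteq> 0"
      using Q_root(2) by simp
    show "poly (P * pderiv Q) (of_int (y - int t)) \<noteq> 0"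
      using Q_root(2,3) P_root(2) by simp
  qed
  also have "\<dots> = fact k / ((-1) ^ t * fact t * fact (k - t))"
    using Q_root(2,3) P_root(2) by simp
  also have "\<dots> = (-1) ^ t * real (k choose t)"
    using binomial_fact[OF t, where 'a = real] by (simp add: field_simps)
  finally show ?thesis .
qed

lemma sum_int_atLeastAtMost_reflect:
  "(\<Sum>z\<in>{y - int k..y}. f z) = (\<Sum>t\<le>k. f (y - int t))"
  by (rule sum.reindex_bij_witness[of _ "\<lambda>t. y - int t" "\<lambda>z. nat (y - z)"]) auto

lemma Sfun_shift: "w \<noteq> 0 \<Longrightarrow> Sfun k (y - int t) w = Sfun k y w / w ^ t"
  unfolding Sfun_def by (simp add: power_int_diff power_int_add algebra_simps)

lemma sum_binomial_div_Sfun: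
  fixes w :: complex
  assumes "w \<noteq> 0" and "w \<noteq> 1"
  shows "(\<Sum>t\<le>k. of_real ((-1) ^ t * real (k choose t)) / Sfun (n + k) (y - int t) w)
       = 1 / Sfun n y w"
proof -
  have "(\<Sum>t\<le>k. of_real ((-1) ^ t * real (k choose t)) / Sfun (n + k) (y - int t) w)
      = (\<Sum>t\<le>k. of_nat (k choose t) * (- w) ^ t * 1 ^ (k - t)) / Sfun (n + k) y w"
    unfolding sum_divide_distrib Sfun_shift[OF assms(1)]
  proof (rule sum.cong)
    fix t assume "t \<in> {..k}"
    show "complex_of_real ((- 1) ^ t * real (k choose t)) / (Sfun (n + k) y w / w ^ t) =
         of_nat (k choose t) * (- w) ^ t * 1 ^ (k - t) / Sfun (n + k) y w"
      unfolding power_minus[of w t] power_one mult_1_right by (simp add: divide_divide_eq_right mult_ac)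
  qed simp
  also have "\<dots> = (1 - w) ^ k / Sfun (n + k) y w"
    unfolding binomial_ring[of "- w" 1 k, symmetric] by simp
  also have "\<dots> = 1 / Sfun n y w"
    using assms unfolding Sfun_def by (simp add: power_add)
  finally show ?thesis .
qed

theorem lemma3p3:
  fixes N d u L :: nat and b a :: "nat \<Rightarrow> nat" and r l :: "nat \<Rightarrow> int"
    and x1 n y :: int and w :: complex
  assumes "multicut_polygon N d x1 u b r L a l"
    and "(n, y) \<in> Sset N d x1 u b r L a l"
    and "w \<noteq> 0" and "w \<noteq> 1"
  shows "(\<Sum>z\<in>{y - (int N - n)..y}.
            complex_of_real (rat_val (smult (fact (nat (int N - n))) (Qpoly N d x1 u b r L a l))
                    (poch_poly y (Suc (nat (int N - n))) * pderiv (Qpoly N d x1 u b r L a l))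
                    (of_int z))
            / Sfun N z w)
         = 1 / Sfun (nat n) y w"
proof -
  define k where "k = nat (int N - n)"
  have "int k = int N - n" and N: "N = nat n + k"
    using Sset_height[OF assms(2)] unfolding k_def by linarith+
  have root_value: "rat_val (smult (fact k) (Qpoly N d x1 u b r L a l))
                 (poch_poly y (Suc k) * pderiv (Qpoly N d x1 u b r L a l)) (of_int (y - int t))
             = (-1) ^ t * real (k choose t)" if "t \<le> k" for t
    unfolding Qpoly_def
    using rat_val_poch_poly_at_root[OF finite_top_points] Sset_top_row_in_top_points[OF assms(1,2)]
      that k_def by blast
  have "(\<Sum>t\<le>k. complex_of_real (rat_val (smult (fact k) (Qpoly N d x1 u b r L a l))
                 (poch_poly y (Suc k) * pderiv (Qpoly N d x1 u b r L a l)) (of_int (y - int t)))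
              / Sfun N (y - int t) w)
      = (\<Sum>t\<le>k. of_real ((-1) ^ t * real (k choose t)) / Sfun (nat n + k) (y - int t) w)"
    by (rule sum.cong) (simp_all only: root_value atMost_iff N[symmetric])
  also have "\<dots> = 1 / Sfun (nat n) y w"
    by (rule sum_binomial_div_Sfun[OF assms(3,4)])
  finally show ?thesis
    unfolding \<open>int k = int N - n\<close>[symmetric] nat_int sum_int_atLeastAtMost_reflect .
qed

end
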